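(* Let $n,m\ge1$, $r>0$, let $\varphi_1,\dots,\varphi_n:\mathbb{R}\to[0,\infty)$ be nonnegative functions and $x_1,\dots,x_m\in\mathbb{R}$ such that for each $j$ there is $i$ with $\varphi_i(x_j)>0$. Set $v^1_i=\sqrt{r/n}$ for $i=1,\dots,n$. For $k\ge1$, given $v^k\in[0,\infty)^n$, let $u^k\in[0,\infty)^n$ with $\sum_i(u^k_i)^2=r$ be a point at which $\widehat l^{\,k}(u)=\prod_{j=1}^m\big(\sum_{i=1}^n u_iv^k_i\varphi_i(x_j)\big)$ attains its maximum over the sphere $\{u\in\mathbb{R}^n:\sum_iu_i^2=r\}$; let $\overline\theta^{k+1}>0$ satisfy $(\overline\theta^{k+1})^2\sum_i u^k_iv^k_i=r$ and set $v^{k+1}_i=\overline\theta^{k+1}\sqrt{u^k_iv^k_i}$. Let $w^k_i=|u^k_i-v^k_i|$. Then $\lim_{k\to\infty}w^k_i=0$ for every $i=1,\dots,n$. *)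

theory Defs
  imports Complex_Main
begin

definition lhat :: "nat \<Rightarrow> nat \<Rightarrow> (nat \<Rightarrow> real \<Rightarrow> real) \<Rightarrow> (nat \<Rightarrow> real)
    \<Rightarrow> (nat \<Rightarrow> real) \<Rightarrow> (nat \<Rightarrow> real) \<Rightarrow> real" where
  "lhat n m \<phi> x v u = (\<Prod>j=1..m. \<Sum>i=1..n. u i * v i * \<phi> i (x j))"

end

theory Submission
  imports Defs
begin

text \<open>Both \<open>u\<^sup>k\<close> and \<open>v\<^sup>k\<close> lie on the sphere of radius \<open>sqrt r\<close>
  (\<open>\<theta>\<close> normalises \<open>v\<^sup>k\<^sup>+\<^sup>1\<close>), so
  \<open>\<Sum>\<^sub>i (u\<^sup>k\<^sub>i - v\<^sup>k\<^sub>i)\<^sup>2 = 2r - 2 \<Sum>\<^sub>i u\<^sup>k\<^sub>i v\<^sup>k\<^sub>i = 2r - 2r / \<theta>(k+1)\<^sup>2\<close>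
  and it suffices that \<open>\<theta>(k+1)\<^sup>2 \<longrightarrow> 1\<close>. The update gives
  \<open>v\<^sup>k\<^sup>+\<^sup>1\<^sub>i v\<^sup>k\<^sup>+\<^sup>1\<^sub>i = \<theta>(k+1)\<^sup>2 u\<^sup>k\<^sub>i v\<^sup>k\<^sub>i\<close>, so the likelihood
  \<open>l(w) = lhat n m \<phi> x w w\<close> satisfies
  \<open>l(v\<^sup>k\<^sup>+\<^sup>1) = (\<theta>(k+1)\<^sup>2)\<^sup>m lhat(v\<^sup>k, u\<^sup>k) \<ge> (\<theta>(k+1)\<^sup>2)\<^sup>m l(v\<^sup>k)\<close>,
  because \<open>u\<^sup>k\<close> maximises \<open>lhat(v\<^sup>k, -)\<close> over a sphere containing \<open>v\<^sup>k\<close>.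
  As \<open>\<theta>(k+1)\<^sup>2 \<ge> 1\<close>, the sequence \<open>l(v\<^sup>k)\<close> is positive, increasing and bounded, hence
  convergent, and the ratios of consecutive terms, which dominate \<open>(\<theta>(k+1)\<^sup>2)\<^sup>m\<close>,
  tend to 1.\<close>

lemma sum_power2_diff_of_spheres:
  fixes a b :: "'i \<Rightarrow> real"
  assumes "(\<Sum>i\<in>A. (a i)\<^sup>2) = r" and "(\<Sum>i\<in>A. (b i)\<^sup>2) = r"
  shows "(\<Sum>i\<in>A. (a i - b i)\<^sup>2) = 2 * r - 2 * (\<Sum>i\<in>A. a i * b i)"
proof -
  have "(\<Sum>i\<in>A. (a i - b i)\<^sup>2) = (\<Sum>i\<in>A. (a i)\<^sup>2) + (\<Sum>i\<in>A. (b i)\<^sup>2) - 2 * (\<Sum>i\<in>A. a i * b i)"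
    by (simp add: power2_diff sum.distrib sum_subtractf sum_distrib_left mult.assoc)
  then show ?thesis using assms by simp
qed

lemma abs_le_sqrt_sum_power2:
  fixes f :: "'i \<Rightarrow> real"
  assumes "finite A" and "i \<in> A"
  shows "\<bar>f i\<bar> \<le> sqrt (\<Sum>j\<in>A. (f j)\<^sup>2)"
proof -
  have "(f i)\<^sup>2 \<le> (\<Sum>j\<in>A. (f j)\<^sup>2)"
    by (rule member_le_sum) (use assms in auto)
  then show ?thesis
    using real_sqrt_le_mono by fastforce
qed

lemma lhat_nonneg:
  assumes "\<And>i t. i \<in> {1..n} \<Longrightarrow> \<phi> i t \<ge> 0"
    and "\<And>i. i \<in> {1..n} \<Longrightarrow> u i \<ge> 0" and "\<And>i. i \<in> {1..n} \<Longrightarrow> v i \<ge> 0"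
  shows "lhat n m \<phi> x v u \<ge> 0"
  unfolding lhat_def using assms by (auto intro!: prod_nonneg sum_nonneg)

lemma lhat_diag_scale:
  assumes "\<And>i. i \<in> {1..n} \<Longrightarrow> v' i * v' i = c * (u i * v i)"
  shows "lhat n m \<phi> x v' v' = c ^ m * lhat n m \<phi> x v u"
proof -
  have "(\<Sum>i=1..n. v' i * v' i * \<phi> i (x j)) = c * (\<Sum>i=1..n. u i * v i * \<phi> i (x j))" for j
    using assms by (simp add: sum_distrib_left mult.assoc)
  then show ?thesis
    unfolding lhat_def by (simp add: prod.distrib)
qed

lemma lhat_diag_le:
  assumes phi_nonneg: "\<And>i t. i \<in> {1..n} \<Longrightarrow> \<phi> i t \<ge> 0"
    and sphere: "(\<Sum>i=1..n. (v i)\<^sup>2) = r"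
  shows "lhat n m \<phi> x v v \<le> (\<Prod>j=1..m. r * (\<Sum>i=1..n. \<phi> i (x j)))"
  unfolding lhat_def
proof (rule prod_mono, rule conjI)
  fix j
  show "0 \<le> (\<Sum>i=1..n. v i * v i * \<phi> i (x j))"
    using phi_nonneg by (auto intro!: sum_nonneg)
  have "(\<Sum>i=1..n. v i * v i * \<phi> i (x j)) \<le> (\<Sum>i=1..n. (v i)\<^sup>2 * (\<Sum>i=1..n. \<phi> i (x j)))"
  proof (rule sum_mono)
    fix i assume "i \<in> {1..n}"
    then have "\<phi> i (x j) \<le> (\<Sum>i=1..n. \<phi> i (x j))"
      by (intro member_le_sum) (use phi_nonneg in auto)
    then show "v i * v i * \<phi> i (x j) \<le> (v i)\<^sup>2 * (\<Sum>i=1..n. \<phi> i (x j))"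
      by (simp add: power2_eq_square mult_left_mono)
  qed
  also have "\<dots> = r * (\<Sum>i=1..n. \<phi> i (x j))"
    using sphere by (simp add: sum_distrib_right[symmetric])
  finally show "(\<Sum>i=1..n. v i * v i * \<phi> i (x j)) \<le> r * (\<Sum>i=1..n. \<phi> i (x j))" .
qed

lemma lhat_diag_pos:
  assumes phi_nonneg: "\<And>i t. i \<in> {1..n} \<Longrightarrow> \<phi> i t \<ge> 0"
    and pos: "\<And>j. j \<in> {1..m} \<Longrightarrow> \<exists>i\<in>{1..n}. \<phi> i (x j) > 0"
    and nonzero: "\<And>i. i \<in> {1..n} \<Longrightarrow> v i \<noteq> 0"
  shows "lhat n m \<phi> x v v > 0"
  unfolding lhat_def
proof (rule prod_pos)
  fix j assume "j \<in> {1..m}"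
  then obtain i0 where i0: "i0 \<in> {1..n}" "\<phi> i0 (x j) > 0"
    using pos by blast
  have "v i0 * v i0 > 0"
    using nonzero[OF i0(1)] by (auto simp: zero_less_mult_iff)
  then have "0 < v i0 * v i0 * \<phi> i0 (x j)"
    using i0(2) by simp
  also have "\<dots> \<le> (\<Sum>i=1..n. v i * v i * \<phi> i (x j))"
    by (rule member_le_sum) (use i0 phi_nonneg in auto)
  finally show "0 < (\<Sum>i=1..n. v i * v i * \<phi> i (x j))" .
qed

lemma growth_factor_tendsto_one:
  fixes a p :: "nat \<Rightarrow> real"
  assumes a0: "a 0 > 0" and bdd: "bdd_above (range a)"
    and p_ge: "\<And>k. 1 \<le> p k" and growth: "\<And>k. p k * a k \<le> a (Suc k)"
  shows "p \<longlonglongrightarrow> 1"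
proof -
  have inc: "incseq a"
  proof (rule incseq_SucI)
    fix k
    have "a k \<le> p k * a k" if "a k \<ge> 0"
      using p_ge[of k] that by (simp add: mult_le_cancel_right1)
    moreover have "a k \<ge> 0"
    proof (induction k)
      case (Suc k)
      then show ?case using growth[of k] p_ge[of k] by (smt (verit) mult_nonneg_nonneg)
    qed (use a0 in simp)
    ultimately show "a k \<le> a (Suc k)" using growth[of k] by simp
  qed
  have a_pos: "a k > 0" for k
    using a0 inc by (smt (verit) incseq_def le0)
  obtain L where aL: "a \<longlonglongrightarrow> L"
    using LIMSEQ_incseq_SUP[OF bdd inc] by blast
  have "L > 0"
    using a0 incseq_le[OF inc aL, of 0] by simp
  then have ratio: "(\<lambda>k. a (Suc k) / a k) \<longlonglongrightarrow> 1"
    using tendsto_divide[OF LIMSEQ_Suc[OF aL] aL] by simp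
  show ?thesis
  proof (rule tendsto_sandwich[OF _ _ tendsto_const ratio])
    show "\<forall>\<^sub>F k in sequentially. 1 \<le> p k" using p_ge by simp
    show "\<forall>\<^sub>F k in sequentially. p k \<le> a (Suc k) / a k"
      using growth a_pos by (simp add: pos_le_divide_eq)
  qed
qed

lemma tendsto_one_of_power_tendsto_one:
  fixes q :: "nat \<Rightarrow> real"
  assumes "m \<ge> 1" and q_ge: "\<And>k. 1 \<le> q k" and "(\<lambda>k. q k ^ m) \<longlonglongrightarrow> 1"
  shows "q \<longlonglongrightarrow> 1"
proof (rule tendsto_sandwich[OF _ _ tendsto_const assms(3)])
  show "\<forall>\<^sub>F k in sequentially. 1 \<le> q k" using q_ge by simp
  have "q k ^ 1 \<le> q k ^ m" for k
    by (rule power_increasing) (use q_ge \<open>m \<ge> 1\<close> in auto)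
  then show "\<forall>\<^sub>F k in sequentially. q k \<le> q k ^ m" by simp
qed

locale lhat_iteration =
  fixes n m :: nat and r :: real
    and \<phi> :: "nat \<Rightarrow> real \<Rightarrow> real" and x :: "nat \<Rightarrow> real"
    and u v :: "nat \<Rightarrow> nat \<Rightarrow> real" and \<theta> :: "nat \<Rightarrow> real"
  assumes n_ge_1: "n \<ge> 1" and m_ge_1: "m \<ge> 1" and r_pos: "r > 0"
    and phi_nonneg: "\<And>i t. i \<in> {1..n} \<Longrightarrow> \<phi> i t \<ge> 0"
    and pos: "\<And>j. j \<in> {1..m} \<Longrightarrow> \<exists>i\<in>{1..n}. \<phi> i (x j) > 0"
    and v1: "\<And>i. i \<in> {1..n} \<Longrightarrow> v 1 i = sqrt (r / real n)"
    and u_nonneg: "\<And>k i. k \<ge> 1 \<Longrightarrow> i \<in> {1..n} \<Longrightarrow> u k i \<ge> 0"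
    and u_sphere: "\<And>k. k \<ge> 1 \<Longrightarrow> (\<Sum>i=1..n. (u k i)\<^sup>2) = r"
    and u_max: "\<And>k w. k \<ge> 1 \<Longrightarrow> (\<Sum>i=1..n. (w i)\<^sup>2) = r \<Longrightarrow>
                  lhat n m \<phi> x (v k) w \<le> lhat n m \<phi> x (v k) (u k)"
    and theta_pos: "\<And>k. k \<ge> 1 \<Longrightarrow> \<theta> (k + 1) > 0"
    and theta_eq: "\<And>k. k \<ge> 1 \<Longrightarrow> (\<theta> (k + 1))\<^sup>2 * (\<Sum>i=1..n. u k i * v k i) = r"
    and v_next: "\<And>k i. k \<ge> 1 \<Longrightarrow> i \<in> {1..n} \<Longrightarrow>
                  v (k + 1) i = \<theta> (k + 1) * sqrt (u k i * v k i)"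
begin

lemma v_nonneg:
  assumes "k \<ge> 1" and "i \<in> {1..n}"
  shows "v k i \<ge> 0"
using assms(1) proof (induction k rule: nat_induct_at_least)
  case base
  then show ?case using v1 assms(2) r_pos by simp
next
  case (Suc k)
  then show ?case
    using v_next[OF Suc.hyps(1) assms(2)] theta_pos[OF Suc.hyps(1)] u_nonneg[OF Suc.hyps(1) assms(2)]
    by simp
qed

lemma v_next_sq:
  assumes "k \<ge> 1" and "i \<in> {1..n}"
  shows "v (k + 1) i * v (k + 1) i = (\<theta> (k + 1))\<^sup>2 * (u k i * v k i)"
  using v_next[OF assms] u_nonneg[OF assms] v_nonneg[OF assms]
  by (simp add: power2_eq_square algebra_simps)

lemma v_sphere:
  assumes "k \<ge> 1"
  shows "(\<Sum>i=1..n. (v k i)\<^sup>2) = r"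
using assms proof (induction k rule: nat_induct_at_least)
  case base
  have "(\<Sum>i=1..n. (v 1 i)\<^sup>2) = (\<Sum>i=1..n. r / real n)"
    by (rule sum.cong) (use v1 r_pos in auto)
  also have "\<dots> = r" using n_ge_1 by simp
  finally show ?case .
next
  case (Suc k)
  have "(\<Sum>i=1..n. (v (k + 1) i)\<^sup>2) = (\<Sum>i=1..n. (\<theta> (k + 1))\<^sup>2 * (u k i * v k i))"
    by (rule sum.cong) (use v_next_sq[OF Suc.hyps(1)] in \<open>auto simp: power2_eq_square\<close>)
  also have "\<dots> = r"
    using theta_eq[OF Suc.hyps(1)] by (simp add: sum_distrib_left)
  finally show ?case by simp
qed

lemma inner_uv_pos:
  assumes "k \<ge> 1"
  shows "(\<Sum>i=1..n. u k i * v k i) > 0"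
proof -
  have "(\<Sum>i=1..n. u k i * v k i) \<ge> 0"
    using u_nonneg v_nonneg assms by (auto intro!: sum_nonneg)
  moreover have "(\<Sum>i=1..n. u k i * v k i) \<noteq> 0"
    using theta_eq[OF assms] r_pos by auto
  ultimately show ?thesis by simp
qed

lemma sum_power2_diff:
  assumes "k \<ge> 1"
  shows "(\<Sum>i=1..n. (u k i - v k i)\<^sup>2) = 2 * r - 2 * (\<Sum>i=1..n. u k i * v k i)"
  by (rule sum_power2_diff_of_spheres[OF u_sphere[OF assms] v_sphere[OF assms]])

lemma theta_sq_ge_1:
  assumes "k \<ge> 1"
  shows "(\<theta> (k + 1))\<^sup>2 \<ge> 1"
proof -
  have "(\<Sum>i=1..n. u k i * v k i) \<le> r"
    using sum_power2_diff[OF assms] sum_nonneg[of "{1..n}" "\<lambda>i. (u k i - v k i)\<^sup>2"] by simp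
  then have "1 * (\<Sum>i=1..n. u k i * v k i) \<le> (\<theta> (k + 1))\<^sup>2 * (\<Sum>i=1..n. u k i * v k i)"
    using theta_eq[OF assms] by simp
  then show ?thesis
    using inner_uv_pos[OF assms] by (simp only: mult_le_cancel_right)
qed

lemma likelihood_growth:
  assumes "k \<ge> 1"
  shows "((\<theta> (k + 1))\<^sup>2) ^ m * lhat n m \<phi> x (v k) (v k) \<le> lhat n m \<phi> x (v (k + 1)) (v (k + 1))"
proof -
  have "lhat n m \<phi> x (v k) (v k) \<le> lhat n m \<phi> x (v k) (u k)"
    using u_max[OF assms v_sphere[OF assms]] .
  then have "((\<theta> (k + 1))\<^sup>2) ^ m * lhat n m \<phi> x (v k) (v k)
      \<le> ((\<theta> (k + 1))\<^sup>2) ^ m * lhat n m \<phi> x (v k) (u k)"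
    by (simp add: mult_left_mono)
  also have "\<dots> = lhat n m \<phi> x (v (k + 1)) (v (k + 1))"
    using v_next_sq[OF assms] by (intro lhat_diag_scale[symmetric])
  finally show ?thesis .
qed

lemma theta_sq_tendsto_1: "(\<lambda>k. (\<theta> (k + 2))\<^sup>2) \<longlonglongrightarrow> 1"
proof (rule tendsto_one_of_power_tendsto_one[OF m_ge_1])
  show "1 \<le> (\<theta> (k + 2))\<^sup>2" for k
    using theta_sq_ge_1[of "k + 1"] by (simp add: add.assoc)
  let ?a = "\<lambda>k. lhat n m \<phi> x (v (k + 1)) (v (k + 1))"
  show "(\<lambda>k. ((\<theta> (k + 2))\<^sup>2) ^ m) \<longlonglongrightarrow> 1"
  proof (rule growth_factor_tendsto_one[where a = ?a])
    have "lhat n m \<phi> x (v 1) (v 1) > 0"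
      by (rule lhat_diag_pos[where v = "v 1"]) (use phi_nonneg pos v1 r_pos n_ge_1 in auto)
    then show "?a 0 > 0" by simp
    show "bdd_above (range ?a)"
      using lhat_diag_le[where \<phi> = \<phi> and n = n, OF phi_nonneg v_sphere]
      by (intro bdd_aboveI[where M = "\<Prod>j=1..m. r * (\<Sum>i=1..n. \<phi> i (x j))"]) auto
    show "1 \<le> ((\<theta> (k + 2))\<^sup>2) ^ m" for k
      using theta_sq_ge_1[of "k + 1"] by (simp add: add.assoc)
    show "((\<theta> (k + 2))\<^sup>2) ^ m * ?a k \<le> ?a (Suc k)" for k
      using likelihood_growth[of "k + 1"] by (simp add: add.assoc)
  qed
qed

lemma abs_diff_tendsto_0:
  assumes "i \<in> {1..n}"
  shows "(\<lambda>k. \<bar>u k i - v k i\<bar>) \<longlonglongrightarrow> 0"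
proof -
  have "(\<lambda>k. (\<Sum>i=1..n. u (k + 1) i * v (k + 1) i)) \<longlonglongrightarrow> r / 1"
  proof -
    have "(\<Sum>i=1..n. u (k + 1) i * v (k + 1) i) = r / (\<theta> (k + 2))\<^sup>2" for k
      using theta_eq[of "k + 1"] theta_pos[of "k + 1"]
      by (simp add: eq_divide_eq mult.commute add.assoc)
    then show ?thesis
      using tendsto_divide[OF tendsto_const theta_sq_tendsto_1] by simp
  qed
  then have "(\<lambda>k. 2 * r - 2 * (\<Sum>i=1..n. u (k + 1) i * v (k + 1) i)) \<longlonglongrightarrow> 2 * r - 2 * (r / 1)"
    by (intro tendsto_intros)
  then have "(\<lambda>k. \<Sum>i=1..n. (u (k + 1) i - v (k + 1) i)\<^sup>2) \<longlonglongrightarrow> 0"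
    using sum_power2_diff by simp
  then have "(\<lambda>k. sqrt (\<Sum>i=1..n. (u (k + 1) i - v (k + 1) i)\<^sup>2)) \<longlonglongrightarrow> 0"
    using tendsto_real_sqrt by fastforce
  then have "(\<lambda>k. \<bar>u (k + 1) i - v (k + 1) i\<bar>) \<longlonglongrightarrow> 0"
  proof (rule tendsto_sandwich[where f = "\<lambda>_. 0", rotated 3])
    show "\<forall>\<^sub>F k in sequentially. \<bar>u (k + 1) i - v (k + 1) i\<bar>
        \<le> sqrt (\<Sum>i=1..n. (u (k + 1) i - v (k + 1) i)\<^sup>2)"
      using abs_le_sqrt_sum_power2[OF _ assms, of "\<lambda>i. u (k + 1) i - v (k + 1) i" for k] by simp
  qed simp_all
  then show ?thesis
    using LIMSEQ_imp_Suc by simp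
qed

end

theorem lemma8:
  fixes n m :: nat and r :: real
    and \<phi> :: "nat \<Rightarrow> real \<Rightarrow> real" and x :: "nat \<Rightarrow> real"
    and u v :: "nat \<Rightarrow> nat \<Rightarrow> real" and \<theta> :: "nat \<Rightarrow> real"
  assumes "n \<ge> 1" and "m \<ge> 1" and "r > 0"
    and phi_nonneg: "\<And>i t. i \<in> {1..n} \<Longrightarrow> \<phi> i t \<ge> 0"
    and pos: "\<And>j. j \<in> {1..m} \<Longrightarrow> \<exists>i\<in>{1..n}. \<phi> i (x j) > 0"
    and v1: "\<And>i. i \<in> {1..n} \<Longrightarrow> v 1 i = sqrt (r / real n)"
    and u_nonneg: "\<And>k i. k \<ge> 1 \<Longrightarrow> i \<in> {1..n} \<Longrightarrow> u k i \<ge> 0"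
    and u_sphere: "\<And>k. k \<ge> 1 \<Longrightarrow> (\<Sum>i=1..n. (u k i)\<^sup>2) = r"
    and u_max: "\<And>k w. k \<ge> 1 \<Longrightarrow> (\<Sum>i=1..n. (w i)\<^sup>2) = r \<Longrightarrow>
                  lhat n m \<phi> x (v k) w \<le> lhat n m \<phi> x (v k) (u k)"
    and theta_pos: "\<And>k. k \<ge> 1 \<Longrightarrow> \<theta> (k + 1) > 0"
    and theta_eq: "\<And>k. k \<ge> 1 \<Longrightarrow> (\<theta> (k + 1))\<^sup>2 * (\<Sum>i=1..n. u k i * v k i) = r"
    and v_next: "\<And>k i. k \<ge> 1 \<Longrightarrow> i \<in> {1..n} \<Longrightarrow>
                  v (k + 1) i = \<theta> (k + 1) * sqrt (u k i * v k i)"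
  shows "\<forall>i\<in>{1..n}. (\<lambda>k. \<bar>u k i - v k i\<bar>) \<longlonglongrightarrow> 0"
proof -
  interpret lhat_iteration n m r \<phi> x u v \<theta>
    using assms by unfold_locales
  show ?thesis
    using abs_diff_tendsto_0 by blast
qed

end
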